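(* Let $J'=(z_w,z_w')$ be a nonempty open interval, let $r:J'\to\mathbb{R}$ be differentiable and non-increasing, and let $h:J'\to\mathbb{R}$ be differentiable with $\dot h(z)=1+h(z)^2-2r(z)h(z)$ on $J'$, having exactly one zero $z_*\in J'$. Let $G(z)=z-\dfrac{2h(z)}{2+h(z)^2-2r(z)h(z)}$ and $z_{n+1}=G(z_n)$. (1) If $0<r(z)<1$ for all $z\in(z_*,z_w')$, then for every $z_0\in(z_*,z_w')$ all iterates are well defined, and $(z_n)$ is monotonically decreasing, stays in $(z_*,z_w')$, and converges to $z_*$. (2) If $-1<r(z)<0$ for all $z\in(z_w,z_* )$, then for every $z_0\in(z_w,z_* )$ all iterates are well defined, and $(z_n)$ is monotonically increasing, stays in $(z_w,z_* )$, and converges to $z_*$.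
   Context: $\dot{}$ denotes differentiation with respect to $z$. Here $h<0$ on $(z_w,z_* )$ and $h>0$ on $(z_*,z_w')$. *)

theory Defs
  imports Complex_Main
begin

definition den :: "(real \<Rightarrow> real) \<Rightarrow> (real \<Rightarrow> real) \<Rightarrow> real \<Rightarrow> real" where
  "den r h z = 2 + (h z)^2 - 2 * r z * h z"

definition Gmap :: "(real \<Rightarrow> real) \<Rightarrow> (real \<Rightarrow> real) \<Rightarrow> real \<Rightarrow> real" where
  "Gmap r h z = z - 2 * h z / den r h z"

end

theory Submission
  imports Defs
begin

text \<open>
  Freeze \<open>\<rho> = r z\<close> in the denominator of \<open>G\<close>. Along the ODE the frozen map
  \<open>F(t) = t - 2 h(t) / (2 + h(t)\<^sup>2 - 2 \<rho> h(t))\<close> has derivative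
  \<open>1 - (4 - 2h\<^sup>2) h' / (2 + h\<^sup>2 - 2\<rho>h)\<^sup>2\<close>, which is positive as long as
  \<open>|\<rho>| < 1\<close> and \<open>0 < h' \<le> 1 + h\<^sup>2 - 2\<rho>h\<close>; the bound on \<open>h'\<close> is exactly where the
  monotonicity of \<open>r\<close> and the sign of \<open>h\<close> enter. Hence \<open>F\<close> is strictly increasing
  between \<open>z\<^sub>*\<close> and \<open>z\<close>, and \<open>F(z\<^sub>*) = z\<^sub>*\<close>, \<open>F(z) = G(z)\<close> place \<open>G(z)\<close> strictly
  between \<open>z\<^sub>*\<close> and \<open>z\<close>. The iterates are therefore monotone and bounded, and their
  limit is a fixed point of the continuous map \<open>G\<close>, which by the above can only be \<open>z\<^sub>*\<close>.
\<close>

lemma ode_rhs_pos: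
  fixes x \<rho> :: real
  assumes "\<bar>\<rho>\<bar> < 1"
  shows "0 < 1 + x^2 - 2 * \<rho> * x"
proof -
  have "1 + x^2 - 2 * \<rho> * x = (x - \<rho>)^2 + (1 - \<rho>^2)"
    by (simp add: power2_eq_square algebra_simps)
  moreover have "\<rho>^2 < 1"
    using assms by (simp add: abs_square_less_1)
  ultimately show ?thesis
    by (smt (verit) zero_le_power2)
qed

lemma den_pos:
  assumes "\<bar>r z\<bar> < 1"
  shows "0 < den r h z"
  using ode_rhs_pos[OF assms, of "h z"] unfolding den_def by simp

lemma frozen_Gmap_deriv_pos:
  fixes x \<rho> d :: real
  assumes "x \<noteq> 0" "\<bar>\<rho>\<bar> < 1" "0 < d" "d \<le> 1 + x^2 - 2 * \<rho> * x"
  shows "0 < 1 - (4 - 2 * x^2) * d / (2 + x^2 - 2 * \<rho> * x)^2"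
proof -
  define f where "f = 1 + x^2 - 2 * \<rho> * x"
  have f_pos: "0 < f"
    unfolding f_def using assms(2) by (rule ode_rhs_pos)
  have D: "2 + x^2 - 2 * \<rho> * x = 1 + f"
    unfolding f_def by simp
  have "(4 - 2 * x^2) * d \<le> max 0 ((4 - 2 * x^2) * f)"
  proof (cases "4 - 2 * x^2 \<le> 0")
    case True
    then have "(4 - 2 * x^2) * d \<le> 0"
      using assms(3) by (intro mult_nonpos_nonneg) auto
    then show ?thesis
      by (simp add: le_max_iff_disj)
  next
    case False
    then show ?thesis
      using assms(4) unfolding f_def by (simp add: le_max_iff_disj mult_left_mono)
  qed
  also have "\<dots> < (1 + f)^2"
  proof -
    have "(1 + f)^2 - (4 - 2 * x^2) * f = (1 - f)^2 + 2 * x^2 * f"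
      by (simp add: power2_eq_square algebra_simps)
    moreover have "0 < 2 * x^2 * f"
      using assms(1) f_pos by simp
    ultimately show ?thesis
      using f_pos by (smt (verit) zero_le_power2 zero_less_power)
  qed
  finally show ?thesis
    using f_pos by (simp add: D)
qed

lemma frozen_Gmap_strict_mono:
  fixes h d :: "real \<Rightarrow> real" and \<rho> a b :: real
  assumes "a < b" "\<bar>\<rho>\<bar> < 1" "continuous_on {a..b} h"
    and "\<And>t. t \<in> {a<..<b} \<Longrightarrow> (h has_real_derivative d t) (at t)"
    and "\<And>t. t \<in> {a<..<b} \<Longrightarrow> h t \<noteq> 0"
    and "\<And>t. t \<in> {a<..<b} \<Longrightarrow> 0 < d t \<and> d t \<le> 1 + (h t)^2 - 2 * \<rho> * h t"
  shows "Gmap (\<lambda>_. \<rho>) h a < Gmap (\<lambda>_. \<rho>) h b"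
proof -
  have D_pos: "0 < 2 + x^2 - 2 * \<rho> * x" for x
    using ode_rhs_pos[OF assms(2), of x] by simp
  let ?F = "\<lambda>t. t - 2 * h t / (2 + (h t)^2 - 2 * \<rho> * h t)"
  have "?F a < ?F b"
  proof (rule DERIV_pos_imp_increasing_open[of a b ?F])
    fix t assume "a < t" "t < b"
    then have t: "t \<in> {a<..<b}" by simp
    have "(?F has_real_derivative 1 - (4 - 2 * (h t)^2) * d t / (2 + (h t)^2 - 2 * \<rho> * h t)^2) (at t)"
      using assms(4)[OF t] D_pos[of "h t"]
      by (auto intro!: derivative_eq_intros) (simp add: field_simps power2_eq_square)
    moreover have "0 < 1 - (4 - 2 * (h t)^2) * d t / (2 + (h t)^2 - 2 * \<rho> * h t)^2"
      using assms(5,6)[OF t] by (intro frozen_Gmap_deriv_pos assms(2)) auto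
    ultimately show "\<exists>y. (?F has_real_derivative y) (at t) \<and> 0 < y"
      by blast
  next
    show "continuous_on {a..b} ?F"
      using assms(3) D_pos by (intro continuous_intros) (auto simp: less_imp_neq[symmetric])
  qed fact
  then show ?thesis
    unfolding Gmap_def den_def .
qed

lemma Gmap_between_right:
  fixes r h :: "real \<Rightarrow> real" and zs z :: real
  assumes "zs < z" "h zs = 0" "continuous_on {zs..z} h"
    and "\<And>t. t \<in> {zs<..<z} \<Longrightarrow> (h has_real_derivative 1 + (h t)^2 - 2 * r t * h t) (at t)"
    and "\<And>t. t \<in> {zs<..z} \<Longrightarrow> 0 < h t \<and> \<bar>r t\<bar> < 1"
    and "\<And>t. t \<in> {zs<..<z} \<Longrightarrow> r z \<le> r t"
  shows "zs < Gmap r h z \<and> Gmap r h z < z"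
proof
  have "Gmap (\<lambda>_. r z) h zs < Gmap (\<lambda>_. r z) h z"
  proof (rule frozen_Gmap_strict_mono[where d = "\<lambda>t. 1 + (h t)^2 - 2 * r t * h t"])
    fix t assume t: "t \<in> {zs<..<z}"
    show "h t \<noteq> 0"
      using t assms(5)[of t] by auto
    have "r z \<le> r t" "0 < h t" "\<bar>r t\<bar> < 1"
      using t assms(5,6) by auto
    then have "(r z - r t) * h t \<le> 0" "0 < 1 + (h t)^2 - 2 * r t * h t"
      using ode_rhs_pos[of "r t" "h t"] by (simp_all add: mult_nonpos_nonneg)
    then show "0 < 1 + (h t)^2 - 2 * r t * h t \<and> 1 + (h t)^2 - 2 * r t * h t \<le> 1 + (h t)^2 - 2 * r z * h t"
      by (simp add: algebra_simps)
  qed (use assms in auto)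
  then show "zs < Gmap r h z"
    using assms(2) by (simp add: Gmap_def den_def)
  show "Gmap r h z < z"
    using assms(1,5) den_pos[of r z h] by (simp add: Gmap_def)
qed

lemma Gmap_between_left:
  fixes r h :: "real \<Rightarrow> real" and zs z :: real
  assumes "z < zs" "h zs = 0" "continuous_on {z..zs} h"
    and "\<And>t. t \<in> {z<..<zs} \<Longrightarrow> (h has_real_derivative 1 + (h t)^2 - 2 * r t * h t) (at t)"
    and "\<And>t. t \<in> {z..<zs} \<Longrightarrow> h t < 0 \<and> \<bar>r t\<bar> < 1"
    and "\<And>t. t \<in> {z<..<zs} \<Longrightarrow> r t \<le> r z"
  shows "z < Gmap r h z \<and> Gmap r h z < zs"
proof
  have "Gmap (\<lambda>_. r z) h z < Gmap (\<lambda>_. r z) h zs"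
  proof (rule frozen_Gmap_strict_mono[where d = "\<lambda>t. 1 + (h t)^2 - 2 * r t * h t"])
    fix t assume t: "t \<in> {z<..<zs}"
    show "h t \<noteq> 0"
      using t assms(5)[of t] by auto
    have "r t \<le> r z" "h t < 0" "\<bar>r t\<bar> < 1"
      using t assms(5,6) by auto
    then have "(r z - r t) * h t \<le> 0" "0 < 1 + (h t)^2 - 2 * r t * h t"
      using ode_rhs_pos[of "r t" "h t"] by (simp_all add: mult_nonneg_nonpos)
    then show "0 < 1 + (h t)^2 - 2 * r t * h t \<and> 1 + (h t)^2 - 2 * r t * h t \<le> 1 + (h t)^2 - 2 * r z * h t"
      by (simp add: algebra_simps)
  qed (use assms in auto)
  then show "Gmap r h z < zs"
    using assms(2) by (simp add: Gmap_def den_def)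
  show "z < Gmap r h z"
    using assms(1,5) den_pos[of r z h] by (simp add: Gmap_def divide_neg_pos)
qed

lemma fixed_point_of_convergent_iterates:
  fixes G :: "'a::t2_space \<Rightarrow> 'a"
  assumes "X \<longlonglongrightarrow> L" "\<And>n. X (Suc n) = G (X n)" "isCont G L"
  shows "G L = L"
proof -
  have "(\<lambda>n. G (X n)) \<longlonglongrightarrow> G L"
    using assms(1,3) isCont_tendsto_compose by blast
  moreover have "(\<lambda>n. G (X n)) \<longlonglongrightarrow> L"
    using LIMSEQ_Suc[OF assms(1)] assms(2) by simp
  ultimately show ?thesis
    using LIMSEQ_unique by blast
qed

lemma funpow_decreasing_tendsto:
  fixes G :: "real \<Rightarrow> real"
  assumes G_between: "\<And>z. z \<in> {a<..<b} \<Longrightarrow> a < G z \<and> G z < z"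
    and G_cont: "\<And>z. z \<in> {a<..<b} \<Longrightarrow> isCont G z"
    and "z0 \<in> {a<..<b}"
  shows "(\<forall>n. (G ^^ n) z0 \<in> {a<..<b}) \<and> decseq (\<lambda>n. (G ^^ n) z0) \<and> (\<lambda>n. (G ^^ n) z0) \<longlonglongrightarrow> a"
proof -
  define X where "X = (\<lambda>n. (G ^^ n) z0)"
  have X_Suc: "X (Suc n) = G (X n)" for n
    by (simp add: X_def)
  have X_in: "X n \<in> {a<..<b}" for n
  proof (induction n)
    case (Suc n)
    then show ?case
      using G_between[OF Suc.IH] X_Suc[of n] by auto
  qed (use assms(3) in \<open>simp add: X_def\<close>)
  have "decseq X"
    using G_between[OF X_in] X_Suc by (intro decseq_SucI) (simp add: less_imp_le)
  then obtain L where L: "X \<longlonglongrightarrow> L" "\<And>n. L \<le> X n"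
    using decseq_convergent[of X a] X_in by (metis greaterThanLessThan_iff less_imp_le)
  have "L = a"
  proof (rule ccontr)
    assume "L \<noteq> a"
    moreover have "a \<le> L"
      using LIMSEQ_le_const[OF L(1), of a] X_in by (auto simp: less_imp_le)
    moreover have "L < b"
      using L(2)[of 0] X_in[of 0] by simp
    ultimately have L_in: "L \<in> {a<..<b}"
      by simp
    then have "G L = L"
      using fixed_point_of_convergent_iterates[OF L(1) X_Suc G_cont] by simp
    then show False
      using G_between[OF L_in] by simp
  qed
  with X_in \<open>decseq X\<close> L(1) show ?thesis
    by (simp add: X_def)
qed

lemma funpow_increasing_tendsto:
  fixes G :: "real \<Rightarrow> real"
  assumes G_between: "\<And>z. z \<in> {a<..<b} \<Longrightarrow> z < G z \<and> G z < b"
    and G_cont: "\<And>z. z \<in> {a<..<b} \<Longrightarrow> isCont G z"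
    and "z0 \<in> {a<..<b}"
  shows "(\<forall>n. (G ^^ n) z0 \<in> {a<..<b}) \<and> incseq (\<lambda>n. (G ^^ n) z0) \<and> (\<lambda>n. (G ^^ n) z0) \<longlonglongrightarrow> b"
proof -
  define H where "H z = - G (- z)" for z
  have H_iter: "(H ^^ n) (- z0) = - (G ^^ n) z0" for n
    by (induction n) (simp_all add: H_def)
  have "(\<forall>n. (H ^^ n) (- z0) \<in> {- b<..<- a}) \<and> decseq (\<lambda>n. (H ^^ n) (- z0)) \<and>
      (\<lambda>n. (H ^^ n) (- z0)) \<longlonglongrightarrow> - b"
  proof (rule funpow_decreasing_tendsto)
    fix z assume "z \<in> {- b<..<- a}"
    then have z: "- z \<in> {a<..<b}"
      by auto
    show "- b < H z \<and> H z < z"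
      using G_between[OF z] by (auto simp: H_def)
    show "isCont H z"
      unfolding H_def using G_cont[OF z]
      by (intro isCont_minus isCont_o2[where f = "\<lambda>z. - z"] continuous_intros) simp
  qed (use assms(3) in auto)
  then show ?thesis
    unfolding H_iter decseq_def incseq_def by (auto simp: tendsto_minus_cancel_left)
qed

lemma isCont_Gmap:
  assumes "isCont r z" "isCont h z" "den r h z \<noteq> 0"
  shows "isCont (Gmap r h) z"
proof -
  have "isCont (\<lambda>z. z - 2 * h z / (2 + (h z)^2 - 2 * r z * h z)) z"
    using assms unfolding den_def by (intro continuous_intros) auto
  then show ?thesis
    unfolding Gmap_def[abs_def] den_def .
qed

lemma Gmap_iterates_right:
  fixes r h :: "real \<Rightarrow> real" and zs b z0 :: real
  assumes "h zs = 0"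
    and h_ode: "\<forall>z\<in>{zs..<b}. (h has_real_derivative 1 + (h z)^2 - 2 * r z * h z) (at z)"
    and h_r_bound: "\<forall>z\<in>{zs<..<b}. 0 < h z \<and> \<bar>r z\<bar> < 1"
    and r_noninc: "\<forall>x\<in>{zs<..<b}. \<forall>y\<in>{zs<..<b}. x \<le> y \<longrightarrow> r y \<le> r x"
    and r_cont: "\<forall>z\<in>{zs<..<b}. isCont r z"
    and z0: "z0 \<in> {zs<..<b}"
  shows "let zn = (\<lambda>n. (Gmap r h ^^ n) z0) in
    (\<forall>n. zn n \<in> {zs<..<b} \<and> den r h (zn n) \<noteq> 0) \<and> decseq zn \<and> zn \<longlonglongrightarrow> zs"
proof -
  have h_cont: "isCont h z" if "z \<in> {zs..<b}" for z
    using h_ode that DERIV_isCont by blast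
  have G_between: "zs < Gmap r h z \<and> Gmap r h z < z" if z: "z \<in> {zs<..<b}" for z
  proof (rule Gmap_between_right)
    show "continuous_on {zs..z} h"
      using z h_cont by (intro continuous_at_imp_continuous_on) auto
  qed (use z assms in auto)
  have G_cont: "isCont (Gmap r h) z" if "z \<in> {zs<..<b}" for z
    using that h_cont h_r_bound r_cont den_pos[of r z h] by (intro isCont_Gmap) auto
  have iter: "(\<forall>n. (Gmap r h ^^ n) z0 \<in> {zs<..<b}) \<and> decseq (\<lambda>n. (Gmap r h ^^ n) z0) \<and>
      (\<lambda>n. (Gmap r h ^^ n) z0) \<longlonglongrightarrow> zs"
    using G_between G_cont z0 by (rule funpow_decreasing_tendsto)
  have "den r h ((Gmap r h ^^ n) z0) \<noteq> 0" for n
    using iter h_r_bound den_pos[of r "(Gmap r h ^^ n) z0" h] by auto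
  with iter show ?thesis
    by (simp add: Let_def)
qed

lemma Gmap_iterates_left:
  fixes r h :: "real \<Rightarrow> real" and zs a z0 :: real
  assumes "h zs = 0"
    and h_ode: "\<forall>z\<in>{a<..zs}. (h has_real_derivative 1 + (h z)^2 - 2 * r z * h z) (at z)"
    and h_r_bound: "\<forall>z\<in>{a<..<zs}. h z < 0 \<and> \<bar>r z\<bar> < 1"
    and r_noninc: "\<forall>x\<in>{a<..<zs}. \<forall>y\<in>{a<..<zs}. x \<le> y \<longrightarrow> r y \<le> r x"
    and r_cont: "\<forall>z\<in>{a<..<zs}. isCont r z"
    and z0: "z0 \<in> {a<..<zs}"
  shows "let zn = (\<lambda>n. (Gmap r h ^^ n) z0) in
    (\<forall>n. zn n \<in> {a<..<zs} \<and> den r h (zn n) \<noteq> 0) \<and> incseq zn \<and> zn \<longlonglongrightarrow> zs"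
proof -
  have h_cont: "isCont h z" if "z \<in> {a<..zs}" for z
    using h_ode that DERIV_isCont by blast
  have G_between: "z < Gmap r h z \<and> Gmap r h z < zs" if z: "z \<in> {a<..<zs}" for z
  proof (rule Gmap_between_left)
    show "continuous_on {z..zs} h"
      using z h_cont by (intro continuous_at_imp_continuous_on) auto
  qed (use z assms in auto)
  have G_cont: "isCont (Gmap r h) z" if "z \<in> {a<..<zs}" for z
    using that h_cont h_r_bound r_cont den_pos[of r z h] by (intro isCont_Gmap) auto
  have iter: "(\<forall>n. (Gmap r h ^^ n) z0 \<in> {a<..<zs}) \<and> incseq (\<lambda>n. (Gmap r h ^^ n) z0) \<and>
      (\<lambda>n. (Gmap r h ^^ n) z0) \<longlonglongrightarrow> zs"
    using G_between G_cont z0 by (rule funpow_increasing_tendsto)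
  have "den r h ((Gmap r h ^^ n) z0) \<noteq> 0" for n
    using iter h_r_bound den_pos[of r "(Gmap r h ^^ n) z0" h] by auto
  with iter show ?thesis
    by (simp add: Let_def)
qed

theorem theorem3p4:
  fixes r h :: "real \<Rightarrow> real" and zw zw' zs :: real
  assumes nonempty: "zw < zw'"
    and r_diff: "\<forall>z\<in>{zw<..<zw'}. r differentiable (at z)"
    and r_noninc: "\<forall>x\<in>{zw<..<zw'}. \<forall>y\<in>{zw<..<zw'}. x \<le> y \<longrightarrow> r y \<le> r x"
    and h_ode: "\<forall>z\<in>{zw<..<zw'}. (h has_real_derivative (1 + (h z)^2 - 2 * r z * h z)) (at z)"
    and zs_in: "zs \<in> {zw<..<zw'}"
    and h_zs: "h zs = 0"
    and h_unique_zero: "\<forall>z\<in>{zw<..<zw'}. h z = 0 \<longrightarrow> z = zs"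
    and h_neg: "\<forall>z\<in>{zw<..<zs}. h z < 0"
    and h_pos: "\<forall>z\<in>{zs<..<zw'}. h z > 0"
  shows
    "((\<forall>z\<in>{zs<..<zw'}. 0 < r z \<and> r z < 1) \<longrightarrow>
       (\<forall>z0\<in>{zs<..<zw'}.
          let zn = (\<lambda>n. (Gmap r h ^^ n) z0) in
          (\<forall>n. zn n \<in> {zs<..<zw'} \<and> den r h (zn n) \<noteq> 0) \<and>
          decseq zn \<and> zn \<longlonglongrightarrow> zs))
   \<and> ((\<forall>z\<in>{zw<..<zs}. -1 < r z \<and> r z < 0) \<longrightarrow>
       (\<forall>z0\<in>{zw<..<zs}.
          let zn = (\<lambda>n. (Gmap r h ^^ n) z0) in
          (\<forall>n. zn n \<in> {zw<..<zs} \<and> den r h (zn n) \<noteq> 0) \<and>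
          incseq zn \<and> zn \<longlonglongrightarrow> zs))"
proof -
  have r_cont: "\<forall>z\<in>{zw<..<zw'}. isCont r z"
    using r_diff by (metis DERIV_isCont real_differentiable_def)
  show ?thesis
  proof (intro conjI impI ballI)
    fix z0 assume "\<forall>z\<in>{zs<..<zw'}. 0 < r z \<and> r z < 1" "z0 \<in> {zs<..<zw'}"
    then show "let zn = (\<lambda>n. (Gmap r h ^^ n) z0) in
        (\<forall>n. zn n \<in> {zs<..<zw'} \<and> den r h (zn n) \<noteq> 0) \<and> decseq zn \<and> zn \<longlonglongrightarrow> zs"
      using h_zs zs_in h_ode h_pos r_noninc r_cont by (intro Gmap_iterates_right) auto
  next
    fix z0 assume "\<forall>z\<in>{zw<..<zs}. -1 < r z \<and> r z < 0" "z0 \<in> {zw<..<zs}"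
    then show "let zn = (\<lambda>n. (Gmap r h ^^ n) z0) in
        (\<forall>n. zn n \<in> {zw<..<zs} \<and> den r h (zn n) \<noteq> 0) \<and> incseq zn \<and> zn \<longlonglongrightarrow> zs"
      using h_zs zs_in h_ode h_neg r_noninc r_cont by (intro Gmap_iterates_left) auto
  qed
qed

end
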